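(* Let $\varphi : X\to X$ be a morphism in $\mathscr{C}$ with kernel $\kappa : K\to X$ and cokernel $\lambda : X\to L$. Then $\varphi$ has a core inverse if and only if $\varphi$ is regular and both $\kappa\lambda : K\to L$ and $\kappa\kappa^{*} : K\to K$ are invertible. In this case, for every $\psi : X\to X$ with $\varphi\psi\varphi=\varphi$, $$\varphi^{\mathrm{core}}=[1_X-\lambda(\kappa\lambda)^{-1}\kappa]\,\psi\,[1_X-\kappa^{*}(\kappa\kappa^{*})^{-1}\kappa].$$
   Context: $\mathscr{C}$ is an additive category with an involution $*$: a map on morphisms sending $\varphi : X\to Y$ to $\varphi^* : Y \to X$ such that $(\varphi^* )^*=\varphi$, $(\varphi\psi)^*=\psi^*\varphi^*$ and $(\varphi+\phi)^*=\varphi^*+\phi^*$. Composition is written left to right: for $\varphi : X\to Y$ and $\psi : Y\to Z$, $\varphi\psi : X \to Z$ means "first $\varphi$, then $\psi$". A kernel of $\varphi : X\to Y$ is a morphism $\kappa : K\to X$ with $\kappa\varphi=0$ such that every $\alpha : M\to X$ with $\alpha\varphi=0$ factors uniquely as $\alpha=\alpha'\kappa$. A cokernel of $\varphi$ is a morphism $\lambda : Y\to L$ with $\varphi\lambda=0$ such that every $\beta : Y\to M$ with $\varphi\beta=0$ factors uniquely as $\beta=\lambda\beta'$. $\varphi$ is regular if there is $\chi$ with $\varphi\chi\varphi=\varphi$. A morphism is invertible if it has a two-sided inverse. For $\varphi : X\to X$, a core inverse of $\varphi$ is a morphism $\chi : X\to X$ with $(\varphi\chi)^*=\varphi\chi$,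 $\varphi\chi^2=\chi$ and $\chi\varphi^2=\varphi$. It is unique when it exists and is denoted $\varphi^{\mathrm{core}}$. *)

theory Defs
  imports Main
begin

text \<open>An additive category with involution, presented through its hom-sets.
  Composition cmp f g is diagrammatic: first f, then g.\<close>

record ('o, 'm) icat =
  Hom   :: "'o \<Rightarrow> 'o \<Rightarrow> 'm set"
  cmp   :: "'m \<Rightarrow> 'm \<Rightarrow> 'm"
  idm   :: "'o \<Rightarrow> 'm"
  zer   :: "'o \<Rightarrow> 'o \<Rightarrow> 'm"
  ad    :: "'m \<Rightarrow> 'm \<Rightarrow> 'm"
  ng    :: "'m \<Rightarrow> 'm"
  invol :: "'m \<Rightarrow> 'm"

locale additive_inv_cat =
  fixes C :: "('o, 'm, 'x) icat_scheme"
  assumes hom_disj: "\<And>f X Y X' Y'. f \<in> Hom C X Y \<Longrightarrow> f \<in> Hom C X' Y' \<Longrightarrow> X = X' \<and> Y = Y'"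
    and cmp_closed: "\<And>f g X Y Z. f \<in> Hom C X Y \<Longrightarrow> g \<in> Hom C Y Z \<Longrightarrow> cmp C f g \<in> Hom C X Z"
    and cmp_assoc: "\<And>f g h X Y Z W. f \<in> Hom C X Y \<Longrightarrow> g \<in> Hom C Y Z \<Longrightarrow> h \<in> Hom C Z W \<Longrightarrow>
                     cmp C (cmp C f g) h = cmp C f (cmp C g h)"
    and idm_closed: "\<And>X. idm C X \<in> Hom C X X"
    and idm_left: "\<And>f X Y. f \<in> Hom C X Y \<Longrightarrow> cmp C (idm C X) f = f"
    and idm_right: "\<And>f X Y. f \<in> Hom C X Y \<Longrightarrow> cmp C f (idm C Y) = f"
    and zer_closed: "\<And>X Y. zer C X Y \<in> Hom C X Y"
    and ad_closed: "\<And>f g X Y. f \<in> Hom C X Y \<Longrightarrow> g \<in> Hom C X Y \<Longrightarrow> ad C f g \<in> Hom C X Y"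
    and ng_closed: "\<And>f X Y. f \<in> Hom C X Y \<Longrightarrow> ng C f \<in> Hom C X Y"
    and ad_assoc: "\<And>f g h X Y. f \<in> Hom C X Y \<Longrightarrow> g \<in> Hom C X Y \<Longrightarrow> h \<in> Hom C X Y \<Longrightarrow>
                     ad C (ad C f g) h = ad C f (ad C g h)"
    and ad_comm: "\<And>f g X Y. f \<in> Hom C X Y \<Longrightarrow> g \<in> Hom C X Y \<Longrightarrow> ad C f g = ad C g f"
    and ad_zer: "\<And>f X Y. f \<in> Hom C X Y \<Longrightarrow> ad C f (zer C X Y) = f"
    and ad_ng: "\<And>f X Y. f \<in> Hom C X Y \<Longrightarrow> ad C f (ng C f) = zer C X Y"
    and cmp_ad_left: "\<And>f g h X Y Z. f \<in> Hom C X Y \<Longrightarrow> g \<in> Hom C X Y \<Longrightarrow> h \<in> Hom C Y Z \<Longrightarrow>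
                     cmp C (ad C f g) h = ad C (cmp C f h) (cmp C g h)"
    and cmp_ad_right: "\<And>f g h X Y Z. f \<in> Hom C X Y \<Longrightarrow> g \<in> Hom C Y Z \<Longrightarrow> h \<in> Hom C Y Z \<Longrightarrow>
                     cmp C f (ad C g h) = ad C (cmp C f g) (cmp C f h)"
    and zero_object: "\<exists>Z. \<forall>X. Hom C Z X = {zer C Z X} \<and> Hom C X Z = {zer C X Z}"
    and biproducts: "\<And>X Y. \<exists>S i1 i2 p1 p2. i1 \<in> Hom C X S \<and> i2 \<in> Hom C Y S \<and>
                       p1 \<in> Hom C S X \<and> p2 \<in> Hom C S Y \<and>
                       cmp C i1 p1 = idm C X \<and> cmp C i2 p2 = idm C Y \<and>
                       cmp C i1 p2 = zer C X Y \<and> cmp C i2 p1 = zer C Y X \<and>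
                       ad C (cmp C p1 i1) (cmp C p2 i2) = idm C S"
    and invol_closed: "\<And>f X Y. f \<in> Hom C X Y \<Longrightarrow> invol C f \<in> Hom C Y X"
    and invol_invol: "\<And>f X Y. f \<in> Hom C X Y \<Longrightarrow> invol C (invol C f) = f"
    and invol_cmp: "\<And>f g X Y Z. f \<in> Hom C X Y \<Longrightarrow> g \<in> Hom C Y Z \<Longrightarrow>
                     invol C (cmp C f g) = cmp C (invol C g) (invol C f)"
    and invol_ad: "\<And>f g X Y. f \<in> Hom C X Y \<Longrightarrow> g \<in> Hom C X Y \<Longrightarrow>
                     invol C (ad C f g) = ad C (invol C f) (invol C g)"

definition is_kernel :: "('o, 'm, 'x) icat_scheme \<Rightarrow> 'm \<Rightarrow> 'o \<Rightarrow> 'o \<Rightarrow> 'm \<Rightarrow> 'o \<Rightarrow> bool" where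
  "is_kernel C \<phi> X Y \<kappa> K \<longleftrightarrow> \<kappa> \<in> Hom C K X \<and> cmp C \<kappa> \<phi> = zer C K Y \<and>
     (\<forall>M \<alpha>. \<alpha> \<in> Hom C M X \<and> cmp C \<alpha> \<phi> = zer C M Y \<longrightarrow>
        (\<exists>!\<alpha>'. \<alpha>' \<in> Hom C M K \<and> \<alpha> = cmp C \<alpha>' \<kappa>))"

definition is_cokernel :: "('o, 'm, 'x) icat_scheme \<Rightarrow> 'm \<Rightarrow> 'o \<Rightarrow> 'o \<Rightarrow> 'm \<Rightarrow> 'o \<Rightarrow> bool" where
  "is_cokernel C \<phi> X Y lam L \<longleftrightarrow> lam \<in> Hom C Y L \<and> cmp C \<phi> lam = zer C X L \<and>
     (\<forall>M \<beta>. \<beta> \<in> Hom C Y M \<and> cmp C \<phi> \<beta> = zer C X M \<longrightarrow>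
        (\<exists>!\<beta>'. \<beta>' \<in> Hom C L M \<and> \<beta> = cmp C lam \<beta>'))"

definition regular :: "('o, 'm, 'x) icat_scheme \<Rightarrow> 'o \<Rightarrow> 'o \<Rightarrow> 'm \<Rightarrow> bool" where
  "regular C X Y \<phi> \<longleftrightarrow> (\<exists>\<chi> \<in> Hom C Y X. cmp C (cmp C \<phi> \<chi>) \<phi> = \<phi>)"

definition invertible_mor :: "('o, 'm, 'x) icat_scheme \<Rightarrow> 'o \<Rightarrow> 'o \<Rightarrow> 'm \<Rightarrow> bool" where
  "invertible_mor C X Y f \<longleftrightarrow> f \<in> Hom C X Y \<and>
     (\<exists>g \<in> Hom C Y X. cmp C f g = idm C X \<and> cmp C g f = idm C Y)"

definition inv_mor :: "('o, 'm, 'x) icat_scheme \<Rightarrow> 'o \<Rightarrow> 'o \<Rightarrow> 'm \<Rightarrow> 'm" where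
  "inv_mor C X Y f = (THE g. g \<in> Hom C Y X \<and> cmp C f g = idm C X \<and> cmp C g f = idm C Y)"

definition core_inverse :: "('o, 'm, 'x) icat_scheme \<Rightarrow> 'o \<Rightarrow> 'm \<Rightarrow> 'm \<Rightarrow> bool" where
  "core_inverse C X \<phi> \<chi> \<longleftrightarrow> \<chi> \<in> Hom C X X \<and>
     invol C (cmp C \<phi> \<chi>) = cmp C \<phi> \<chi> \<and>
     cmp C \<phi> (cmp C \<chi> \<chi>) = \<chi> \<and>
     cmp C \<chi> (cmp C \<phi> \<phi>) = \<phi>"

definition core :: "('o, 'm, 'x) icat_scheme \<Rightarrow> 'o \<Rightarrow> 'm \<Rightarrow> 'm" where
  "core C X \<phi> = (THE \<chi>. core_inverse C X \<phi> \<chi>)"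

definition sub_mor :: "('o, 'm, 'x) icat_scheme \<Rightarrow> 'm \<Rightarrow> 'm \<Rightarrow> 'm" where
  "sub_mor C f g = ad C f (ng C g)"

end

theory Submission
  imports Defs
begin

text \<open>If \<chi> is the core inverse of \<phi>, then 1 - \<chi>\<phi> and 1 - \<phi>\<chi> are annihilated by \<phi> on the
  appropriate sides, so they factor through \<kappa> and \<lambda>; products of the factors are two-sided inverses of
  \<kappa>\<lambda> and of \<kappa>\<kappa>*. Conversely, E = 1 - \<lambda>(\<kappa>\<lambda>)^-1\<kappa> and F = 1 - \<kappa>*(\<kappa>\<kappa>*)^-1\<kappa> satisfy
  \<kappa>E = 0 = E\<lambda>, \<kappa>F = 0 and F* = F. For an inner inverse \<psi>, factoring 1 - \<phi>\<psi> through \<kappa> and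
  1 - \<psi>\<phi> through \<lambda> gives \<phi>\<psi>F = F and E\<psi>\<phi> = E, from which the defining identities of the
  core inverse follow for E\<psi>F; uniqueness of core inverses yields the formula.\<close>

section \<open>Additive structure of hom-sets\<close>

context additive_inv_cat
begin

lemma ad_left_cancel:
  assumes "a \<in> Hom C X Y" "b \<in> Hom C X Y" "c \<in> Hom C X Y" "ad C a b = ad C a c"
  shows "b = c"
proof -
  have zer_ad: "\<And>f. f \<in> Hom C X Y \<Longrightarrow> ad C (zer C X Y) f = f"
    by (metis ad_comm ad_zer zer_closed)
  have ng_ad: "ad C (ng C a) a = zer C X Y"
    by (metis ad_comm ad_ng ng_closed assms(1))
  have "b = ad C (ad C (ng C a) a) b" using zer_ad ng_ad assms by simp
  also have "\<dots> = ad C (ng C a) (ad C a c)" using ad_assoc ng_closed assms by metis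
  also have "\<dots> = c" using zer_ad ng_ad ad_assoc ng_closed assms by metis
  finally show ?thesis .
qed

lemma ng_unique: "a \<in> Hom C X Y \<Longrightarrow> b \<in> Hom C X Y \<Longrightarrow> ad C a b = zer C X Y \<Longrightarrow> b = ng C a"
  by (metis ad_left_cancel ad_ng ng_closed)

lemma ng_ng: "f \<in> Hom C X Y \<Longrightarrow> ng C (ng C f) = f"
  by (metis ad_comm ad_ng ng_unique ng_closed)

lemma ad_self_imp_zer:
  assumes "z \<in> Hom C X Y" "ad C z z = z"
  shows "z = zer C X Y"
  using ad_left_cancel[OF assms(1,1) zer_closed] assms ad_zer by metis

lemma cmp_zer_right:
  assumes "f \<in> Hom C X Y"
  shows "cmp C f (zer C Y Z) = zer C X Z"
proof (rule ad_self_imp_zer)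
  show "cmp C f (zer C Y Z) \<in> Hom C X Z" using assms zer_closed by (rule cmp_closed)
  show "ad C (cmp C f (zer C Y Z)) (cmp C f (zer C Y Z)) = cmp C f (zer C Y Z)"
    using cmp_ad_right[OF assms zer_closed zer_closed] by (simp add: ad_zer zer_closed)
qed

lemma cmp_zer_left:
  assumes "f \<in> Hom C Y Z"
  shows "cmp C (zer C X Y) f = zer C X Z"
proof (rule ad_self_imp_zer)
  show "cmp C (zer C X Y) f \<in> Hom C X Z" using zer_closed assms by (rule cmp_closed)
  show "ad C (cmp C (zer C X Y) f) (cmp C (zer C X Y) f) = cmp C (zer C X Y) f"
    using cmp_ad_left[OF zer_closed zer_closed assms] by (simp add: ad_zer zer_closed)
qed

lemma invol_zer: "invol C (zer C X Y) = zer C Y X"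
proof (rule ad_self_imp_zer)
  show "invol C (zer C X Y) \<in> Hom C Y X" using zer_closed by (rule invol_closed)
  show "ad C (invol C (zer C X Y)) (invol C (zer C X Y)) = invol C (zer C X Y)"
    using invol_ad[OF zer_closed zer_closed] by (simp add: ad_zer zer_closed)
qed

lemma cmp_ng_right:
  assumes f: "f \<in> Hom C X Y" and g: "g \<in> Hom C Y Z"
  shows "cmp C f (ng C g) = ng C (cmp C f g)"
proof (rule ng_unique)
  show "cmp C f g \<in> Hom C X Z" "cmp C f (ng C g) \<in> Hom C X Z"
    using f g ng_closed[OF g] by (blast intro: cmp_closed)+
  show "ad C (cmp C f g) (cmp C f (ng C g)) = zer C X Z"
    by (simp add: cmp_ad_right[OF f g ng_closed[OF g], symmetric] ad_ng[OF g] cmp_zer_right[OF f])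
qed

lemma cmp_ng_left:
  assumes f: "f \<in> Hom C X Y" and g: "g \<in> Hom C Y Z"
  shows "cmp C (ng C f) g = ng C (cmp C f g)"
proof (rule ng_unique)
  show "cmp C f g \<in> Hom C X Z" "cmp C (ng C f) g \<in> Hom C X Z"
    using f g ng_closed[OF f] by (blast intro: cmp_closed)+
  show "ad C (cmp C f g) (cmp C (ng C f) g) = zer C X Z"
    by (simp add: cmp_ad_left[OF f ng_closed[OF f] g, symmetric] ad_ng[OF f] cmp_zer_left[OF g])
qed

lemma invol_ng:
  assumes f: "f \<in> Hom C X Y"
  shows "invol C (ng C f) = ng C (invol C f)"
proof (rule ng_unique)
  show "invol C f \<in> Hom C Y X" "invol C (ng C f) \<in> Hom C Y X"
    using f ng_closed[OF f] by (blast intro: invol_closed)+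
  show "ad C (invol C f) (invol C (ng C f)) = zer C Y X"
    by (simp add: invol_ad[OF f ng_closed[OF f], symmetric] ad_ng[OF f] invol_zer)
qed

lemma invol_idm: "invol C (idm C X) = idm C X"
  by (metis idm_closed idm_left invol_closed invol_cmp invol_invol)

lemma sub_mor_closed: "f \<in> Hom C X Y \<Longrightarrow> g \<in> Hom C X Y \<Longrightarrow> sub_mor C f g \<in> Hom C X Y"
  unfolding sub_mor_def using ad_closed ng_closed by blast

lemma sub_mor_self: "f \<in> Hom C X Y \<Longrightarrow> sub_mor C f f = zer C X Y"
  unfolding sub_mor_def by (rule ad_ng)

lemma sub_mor_zer: "f \<in> Hom C X Y \<Longrightarrow> sub_mor C f (zer C X Y) = f"
  unfolding sub_mor_def by (metis ad_zer ng_unique zer_closed)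

lemma sub_mor_eq_zerD: "f \<in> Hom C X Y \<Longrightarrow> g \<in> Hom C X Y \<Longrightarrow> sub_mor C f g = zer C X Y \<Longrightarrow> f = g"
  unfolding sub_mor_def by (metis ng_unique ng_ng ng_closed)

lemma invol_sub_mor: "f \<in> Hom C X Y \<Longrightarrow> g \<in> Hom C X Y \<Longrightarrow>
    invol C (sub_mor C f g) = sub_mor C (invol C f) (invol C g)"
  unfolding sub_mor_def by (metis invol_ad invol_ng ng_closed)

lemma cmp_sub_mor_right: "f \<in> Hom C X Y \<Longrightarrow> g \<in> Hom C Y Z \<Longrightarrow> h \<in> Hom C Y Z \<Longrightarrow>
    cmp C f (sub_mor C g h) = sub_mor C (cmp C f g) (cmp C f h)"
  unfolding sub_mor_def by (metis cmp_ad_right cmp_ng_right ng_closed)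

lemma cmp_sub_mor_left: "f \<in> Hom C X Y \<Longrightarrow> g \<in> Hom C X Y \<Longrightarrow> h \<in> Hom C Y Z \<Longrightarrow>
    cmp C (sub_mor C f g) h = sub_mor C (cmp C f h) (cmp C g h)"
  unfolding sub_mor_def by (metis cmp_ad_left cmp_ng_left ng_closed)

end

section \<open>Arrows carrying their source and target\<close>

text \<open>By hom_disj a morphism lies in at most one hom-set. Restating the axioms for such arrows
  lets the simplifier reassociate and simplify composites without naming objects.\<close>

definition arr :: "('o, 'm, 'x) icat_scheme \<Rightarrow> 'm \<Rightarrow> bool" where
  "arr C f \<longleftrightarrow> (\<exists>X Y. f \<in> Hom C X Y)"

definition src :: "('o, 'm, 'x) icat_scheme \<Rightarrow> 'm \<Rightarrow> 'o" where
  "src C f = (THE X. \<exists>Y. f \<in> Hom C X Y)"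

definition trg :: "('o, 'm, 'x) icat_scheme \<Rightarrow> 'm \<Rightarrow> 'o" where
  "trg C f = (THE Y. \<exists>X. f \<in> Hom C X Y)"

context additive_inv_cat
begin

lemma hom_iff: "f \<in> Hom C X Y \<longleftrightarrow> arr C f \<and> src C f = X \<and> trg C f = Y"
proof
  assume "f \<in> Hom C X Y"
  then show "arr C f \<and> src C f = X \<and> trg C f = Y"
    unfolding arr_def src_def trg_def by (auto intro!: the_equality dest: hom_disj)
next
  assume "arr C f \<and> src C f = X \<and> trg C f = Y"
  then obtain X' Y' where "f \<in> Hom C X' Y'" "src C f = X" "trg C f = Y"
    unfolding arr_def by blast
  moreover from this(1) have "src C f = X' \<and> trg C f = Y'"
    unfolding src_def trg_def by (auto intro!: the_equality dest: hom_disj)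
  ultimately show "f \<in> Hom C X Y" by simp
qed

lemma arr_cmp [simp]:
  "arr C f \<Longrightarrow> arr C g \<Longrightarrow> trg C f = src C g \<Longrightarrow>
    arr C (cmp C f g) \<and> src C (cmp C f g) = src C f \<and> trg C (cmp C f g) = trg C g"
  using cmp_closed[of f "src C f" "trg C f" g "trg C g"] by (simp add: hom_iff)

lemma arr_idm [simp]: "arr C (idm C X) \<and> src C (idm C X) = X \<and> trg C (idm C X) = X"
  using idm_closed by (simp add: hom_iff)

lemma arr_zer [simp]: "arr C (zer C X Y) \<and> src C (zer C X Y) = X \<and> trg C (zer C X Y) = Y"
  using zer_closed by (simp add: hom_iff)

lemma arr_invol [simp]:
  "arr C f \<Longrightarrow> arr C (invol C f) \<and> src C (invol C f) = trg C f \<and> trg C (invol C f) = src C f"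
  using invol_closed[of f "src C f" "trg C f"] by (simp add: hom_iff)

lemma arr_sub_mor [simp]:
  "arr C f \<Longrightarrow> arr C g \<Longrightarrow> src C f = src C g \<Longrightarrow> trg C f = trg C g \<Longrightarrow>
    arr C (sub_mor C f g) \<and> src C (sub_mor C f g) = src C f \<and> trg C (sub_mor C f g) = trg C f"
  using sub_mor_closed[of f "src C f" "trg C f" g] by (simp add: hom_iff)

lemma cmp_assoc_arr [simp]:
  "arr C f \<Longrightarrow> arr C g \<Longrightarrow> arr C h \<Longrightarrow> trg C f = src C g \<Longrightarrow> trg C g = src C h \<Longrightarrow>
    cmp C (cmp C f g) h = cmp C f (cmp C g h)"
  using cmp_assoc[of f "src C f" "trg C f" g "trg C g" h "trg C h"] by (simp add: hom_iff)

lemma idm_left_arr [simp]: "arr C f \<Longrightarrow> src C f = X \<Longrightarrow> cmp C (idm C X) f = f"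
  using idm_left[of f X "trg C f"] by (simp add: hom_iff)

lemma idm_right_arr [simp]: "arr C f \<Longrightarrow> trg C f = Y \<Longrightarrow> cmp C f (idm C Y) = f"
  using idm_right[of f "src C f" Y] by (simp add: hom_iff)

lemma cmp_zer_left_arr [simp]: "arr C f \<Longrightarrow> src C f = Y \<Longrightarrow> cmp C (zer C X Y) f = zer C X (trg C f)"
  using cmp_zer_left[of f Y "trg C f" X] by (simp add: hom_iff)

lemma cmp_zer_right_arr [simp]: "arr C f \<Longrightarrow> trg C f = Y \<Longrightarrow> cmp C f (zer C Y Z) = zer C (src C f) Z"
  using cmp_zer_right[of f "src C f" Y Z] by (simp add: hom_iff)

lemma invol_invol_arr [simp]: "arr C f \<Longrightarrow> invol C (invol C f) = f"
  using invol_invol[of f "src C f" "trg C f"] by (simp add: hom_iff)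

lemma invol_cmp_arr [simp]:
  "arr C f \<Longrightarrow> arr C g \<Longrightarrow> trg C f = src C g \<Longrightarrow> invol C (cmp C f g) = cmp C (invol C g) (invol C f)"
  using invol_cmp[of f "src C f" "trg C f" g "trg C g"] by (simp add: hom_iff)

lemma invol_sub_mor_arr [simp]:
  "arr C f \<Longrightarrow> arr C g \<Longrightarrow> src C f = src C g \<Longrightarrow> trg C f = trg C g \<Longrightarrow>
    invol C (sub_mor C f g) = sub_mor C (invol C f) (invol C g)"
  using invol_sub_mor[of f "src C f" "trg C f" g] by (simp add: hom_iff)

declare invol_idm [simp] invol_zer [simp]

lemma cmp_sub_mor_left_arr [simp]:
  "arr C f \<Longrightarrow> arr C g \<Longrightarrow> arr C h \<Longrightarrow> src C f = src C g \<Longrightarrow> trg C f = trg C g \<Longrightarrow>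
    trg C f = src C h \<Longrightarrow> cmp C (sub_mor C f g) h = sub_mor C (cmp C f h) (cmp C g h)"
  using cmp_sub_mor_left[of f "src C f" "trg C f" g h "trg C h"] by (simp add: hom_iff)

lemma cmp_sub_mor_right_arr [simp]:
  "arr C f \<Longrightarrow> arr C g \<Longrightarrow> arr C h \<Longrightarrow> trg C f = src C g \<Longrightarrow> src C g = src C h \<Longrightarrow>
    trg C g = trg C h \<Longrightarrow> cmp C f (sub_mor C g h) = sub_mor C (cmp C f g) (cmp C f h)"
  using cmp_sub_mor_right[of f "src C f" "src C g" g "trg C g" h] by (simp add: hom_iff)

lemma sub_mor_self_arr [simp]: "arr C f \<Longrightarrow> sub_mor C f f = zer C (src C f) (trg C f)"
  using sub_mor_self[of f "src C f" "trg C f"] by (simp add: hom_iff)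

lemma sub_mor_zer_arr [simp]: "arr C f \<Longrightarrow> src C f = X \<Longrightarrow> trg C f = Y \<Longrightarrow> sub_mor C f (zer C X Y) = f"
  using sub_mor_zer[of f X Y] by (simp add: hom_iff)

lemma sub_mor_eq_zerD_arr:
  "arr C f \<Longrightarrow> arr C g \<Longrightarrow> src C f = src C g \<Longrightarrow> trg C f = trg C g \<Longrightarrow>
    sub_mor C f g = zer C (src C f) (trg C f) \<Longrightarrow> f = g"
  using sub_mor_eq_zerD[of f "src C f" "trg C f" g] by (simp add: hom_iff)

text \<open>The simplifier normalises composites to right-nested form; these rules turn an equation
  between short composites into one usable inside longer right-nested ones.\<close>

lemma cmp_reduce:
  "cmp C f g = k \<Longrightarrow> arr C f \<Longrightarrow> arr C g \<Longrightarrow> arr C h \<Longrightarrow> trg C f = src C g \<Longrightarrow> trg C g = src C h \<Longrightarrow>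
    cmp C f (cmp C g h) = cmp C k h"
  by (hypsubst, simp)

lemma cmp_reduce3:
  "cmp C f (cmp C g h) = k \<Longrightarrow> arr C f \<Longrightarrow> arr C g \<Longrightarrow> arr C h \<Longrightarrow> arr C j \<Longrightarrow>
    trg C f = src C g \<Longrightarrow> trg C g = src C h \<Longrightarrow> trg C h = src C j \<Longrightarrow>
    cmp C f (cmp C g (cmp C h j)) = cmp C k j"
  by (hypsubst, simp)

end

section \<open>Kernels, cokernels and invertible morphisms\<close>

context additive_inv_cat
begin

lemma kernel_factor:
  "is_kernel C \<phi> X Y \<kappa> K \<Longrightarrow> \<alpha> \<in> Hom C M X \<Longrightarrow> cmp C \<alpha> \<phi> = zer C M Y \<Longrightarrow>
    \<exists>a \<in> Hom C M K. \<alpha> = cmp C a \<kappa>"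
  unfolding is_kernel_def by blast

lemma cokernel_factor:
  "is_cokernel C \<phi> X Y lam L \<Longrightarrow> \<beta> \<in> Hom C Y M \<Longrightarrow> cmp C \<phi> \<beta> = zer C X M \<Longrightarrow>
    \<exists>b \<in> Hom C L M. \<beta> = cmp C lam b"
  unfolding is_cokernel_def by blast

lemma kernel_cancel:
  assumes ker: "is_kernel C \<phi> X Y \<kappa> K" and \<phi>: "\<phi> \<in> Hom C X Y"
    and a: "a \<in> Hom C M K" and b: "b \<in> Hom C M K" and eq: "cmp C a \<kappa> = cmp C b \<kappa>"
  shows "a = b"
proof -
  have \<kappa>: "\<kappa> \<in> Hom C K X" and \<kappa>\<phi>: "cmp C \<kappa> \<phi> = zer C K Y"
    using ker unfolding is_kernel_def by auto
  have "cmp C (cmp C a \<kappa>) \<phi> = zer C M Y"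
    by (simp add: cmp_assoc[OF a \<kappa> \<phi>] \<kappa>\<phi> cmp_zer_right[OF a])
  then have "\<exists>!a'. a' \<in> Hom C M K \<and> cmp C a \<kappa> = cmp C a' \<kappa>"
    using ker cmp_closed[OF a \<kappa>] unfolding is_kernel_def by blast
  then show ?thesis using a b eq by blast
qed

lemma cokernel_cancel:
  assumes coker: "is_cokernel C \<phi> X Y lam L" and \<phi>: "\<phi> \<in> Hom C X Y"
    and a: "a \<in> Hom C L M" and b: "b \<in> Hom C L M" and eq: "cmp C lam a = cmp C lam b"
  shows "a = b"
proof -
  have lam: "lam \<in> Hom C Y L" and \<phi>lam: "cmp C \<phi> lam = zer C X L"
    using coker unfolding is_cokernel_def by auto
  have "cmp C \<phi> (cmp C lam a) = zer C X M"
    by (simp add: cmp_assoc[OF \<phi> lam a, symmetric] \<phi>lam cmp_zer_left[OF a])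
  then have "\<exists>!a'. a' \<in> Hom C L M \<and> cmp C lam a = cmp C lam a'"
    using coker cmp_closed[OF lam a] unfolding is_cokernel_def by blast
  then show ?thesis using a b eq by blast
qed

lemma kernel_right_inverse:
  assumes ker: "is_kernel C \<phi> X Y \<kappa> K" and \<phi>: "\<phi> \<in> Hom C X Y"
    and a: "a \<in> Hom C X K" and \<kappa>a\<kappa>: "cmp C \<kappa> (cmp C a \<kappa>) = \<kappa>"
  shows "cmp C \<kappa> a = idm C K"
proof (rule kernel_cancel[OF ker \<phi>])
  have \<kappa>: "\<kappa> \<in> Hom C K X" using ker unfolding is_kernel_def by blast
  note [simp] = \<kappa>[unfolded hom_iff] a[unfolded hom_iff]
  show "cmp C \<kappa> a \<in> Hom C K K" "idm C K \<in> Hom C K K" by (simp_all add: hom_iff)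
  show "cmp C (cmp C \<kappa> a) \<kappa> = cmp C (idm C K) \<kappa>" by (simp add: \<kappa>a\<kappa>)
qed

lemma cokernel_left_inverse:
  assumes coker: "is_cokernel C \<phi> X Y lam L" and \<phi>: "\<phi> \<in> Hom C X Y"
    and b: "b \<in> Hom C L Y" and lam_b_lam: "cmp C lam (cmp C b lam) = lam"
  shows "cmp C b lam = idm C L"
proof (rule cokernel_cancel[OF coker \<phi>])
  have lam: "lam \<in> Hom C Y L" using coker unfolding is_cokernel_def by blast
  note [simp] = lam[unfolded hom_iff] b[unfolded hom_iff]
  show "cmp C b lam \<in> Hom C L L" "idm C L \<in> Hom C L L" by (simp_all add: hom_iff)
  show "cmp C lam (cmp C b lam) = cmp C lam (idm C L)" by (simp add: lam_b_lam)
qed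

lemma cmp_inner_inverse_kernel_annihilator:
  assumes ker: "is_kernel C \<phi> X Y \<kappa> K" and \<phi>: "\<phi> \<in> Hom C X Y" and \<psi>: "\<psi> \<in> Hom C Y X"
    and inner: "cmp C \<phi> (cmp C \<psi> \<phi>) = \<phi>"
    and F: "F \<in> Hom C X Z" and \<kappa>F: "cmp C \<kappa> F = zer C K Z"
  shows "cmp C \<phi> (cmp C \<psi> F) = F"
proof -
  have \<kappa>: "\<kappa> \<in> Hom C K X" using ker unfolding is_kernel_def by blast
  note [simp] = \<phi>[unfolded hom_iff] \<psi>[unfolded hom_iff] \<kappa>[unfolded hom_iff] F[unfolded hom_iff]
  let ?e = "sub_mor C (idm C X) (cmp C \<phi> \<psi>)"
  have "?e \<in> Hom C X X" "cmp C ?e \<phi> = zer C X Y" by (simp_all add: hom_iff inner)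
  then obtain a where a: "a \<in> Hom C X K" "?e = cmp C a \<kappa>"
    using kernel_factor[OF ker] by blast
  then have "cmp C ?e F = zer C X Z" by (simp add: hom_iff \<kappa>F)
  then have "sub_mor C F (cmp C \<phi> (cmp C \<psi> F)) = zer C X Z" by simp
  then show ?thesis using sub_mor_eq_zerD_arr[of F "cmp C \<phi> (cmp C \<psi> F)"] by simp
qed

lemma cmp_inner_inverse_cokernel_annihilator:
  assumes coker: "is_cokernel C \<phi> X Y lam L" and \<phi>: "\<phi> \<in> Hom C X Y" and \<psi>: "\<psi> \<in> Hom C Y X"
    and inner: "cmp C \<phi> (cmp C \<psi> \<phi>) = \<phi>"
    and E: "E \<in> Hom C Z Y" and Elam: "cmp C E lam = zer C Z L"
  shows "cmp C E (cmp C \<psi> \<phi>) = E"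
proof -
  have lam: "lam \<in> Hom C Y L" using coker unfolding is_cokernel_def by blast
  note [simp] = \<phi>[unfolded hom_iff] \<psi>[unfolded hom_iff] lam[unfolded hom_iff] E[unfolded hom_iff]
  let ?e = "sub_mor C (idm C Y) (cmp C \<psi> \<phi>)"
  have "?e \<in> Hom C Y Y" "cmp C \<phi> ?e = zer C X Y" by (simp_all add: hom_iff inner)
  then obtain b where b: "b \<in> Hom C L Y" "?e = cmp C lam b"
    using cokernel_factor[OF coker] by blast
  then have "cmp C E ?e = zer C Z Y" by (simp add: hom_iff cmp_reduce[OF Elam])
  then have "sub_mor C E (cmp C E (cmp C \<psi> \<phi>)) = zer C Z Y" by simp
  then show ?thesis using sub_mor_eq_zerD_arr[of E "cmp C E (cmp C \<psi> \<phi>)"] by simp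
qed

lemma invertible_mor_cmpI:
  assumes f: "f \<in> Hom C A X" and g: "g \<in> Hom C X B" and a: "a \<in> Hom C X A" and b: "b \<in> Hom C B X"
    and fa: "cmp C f a = idm C A" and bg: "cmp C b g = idm C B" and af_gb: "cmp C a f = cmp C g b"
  shows "invertible_mor C A B (cmp C f g)"
  unfolding invertible_mor_def
proof (intro conjI bexI)
  note [simp] = f[unfolded hom_iff] g[unfolded hom_iff] a[unfolded hom_iff] b[unfolded hom_iff]
  show "cmp C f g \<in> Hom C A B" "cmp C b a \<in> Hom C B A" by (simp_all add: hom_iff)
  have "cmp C (cmp C f g) (cmp C b a) = cmp C f (cmp C a (cmp C f a))"
    by (simp add: cmp_reduce[OF af_gb])
  then show "cmp C (cmp C f g) (cmp C b a) = idm C A" by (simp add: fa)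
  have "cmp C (cmp C b a) (cmp C f g) = cmp C b (cmp C g (cmp C b g))"
    by (simp add: cmp_reduce[OF af_gb])
  then show "cmp C (cmp C b a) (cmp C f g) = idm C B" by (simp add: bg)
qed

lemma invertible_mor_inv_mor:
  assumes "invertible_mor C X Y f"
  shows "inv_mor C X Y f \<in> Hom C Y X \<and> cmp C f (inv_mor C X Y f) = idm C X \<and>
    cmp C (inv_mor C X Y f) f = idm C Y"
proof -
  have f: "f \<in> Hom C X Y" using assms unfolding invertible_mor_def by blast
  have uniq: "g = g'"
    if "g \<in> Hom C Y X" "cmp C g f = idm C Y" "g' \<in> Hom C Y X" "cmp C f g' = idm C X" for g g'
  proof -
    have "g = cmp C g (cmp C f g')" using that idm_right by metis
    also have "\<dots> = cmp C (cmp C g f) g'" using cmp_assoc that f by metis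
    also have "\<dots> = g'" using that idm_left by metis
    finally show ?thesis .
  qed
  show ?thesis
    unfolding inv_mor_def by (rule theI') (use assms uniq in \<open>auto simp: invertible_mor_def\<close>)
qed

end

section \<open>Core inverses\<close>

context additive_inv_cat
begin

lemma selfadjoint_right_inverse:
  assumes h: "h \<in> Hom C X X" and v: "v \<in> Hom C X X"
    and h_sa: "invol C h = h" and hv: "cmp C h v = idm C X"
  shows "invol C v = v"
proof -
  note [simp] = h[unfolded hom_iff] v[unfolded hom_iff]
  have vh: "cmp C (invol C v) h = idm C X"
    using arg_cong[OF hv, of "invol C"] by (simp add: h_sa)
  have "invol C v = cmp C (invol C v) (cmp C h v)" by (simp add: hv)
  also have "\<dots> = v" by (simp add: cmp_reduce[OF vh])
  finally show ?thesis .
qed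

lemma core_identities_imp_inner:
  assumes \<phi>: "\<phi> \<in> Hom C X X" and \<chi>: "\<chi> \<in> Hom C X X"
    and \<chi>\<phi>\<phi>: "cmp C \<chi> (cmp C \<phi> \<phi>) = \<phi>" and \<phi>\<chi>\<chi>: "cmp C \<phi> (cmp C \<chi> \<chi>) = \<chi>"
  shows "cmp C \<phi> (cmp C \<chi> \<phi>) = \<phi>"
proof -
  note [simp] = \<phi>[unfolded hom_iff] \<chi>[unfolded hom_iff]
  have "cmp C \<phi> (cmp C \<chi> \<phi>) = cmp C \<phi> (cmp C \<chi> (cmp C \<chi> (cmp C \<phi> \<phi>)))" by (simp add: \<chi>\<phi>\<phi>)
  also have "\<dots> = cmp C \<chi> (cmp C \<phi> \<phi>)" by (simp add: cmp_reduce3[OF \<phi>\<chi>\<chi>])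
  finally show ?thesis using \<chi>\<phi>\<phi> by simp
qed

lemma core_identities_imp_outer:
  assumes \<phi>: "\<phi> \<in> Hom C X X" and \<chi>: "\<chi> \<in> Hom C X X"
    and \<chi>\<phi>\<phi>: "cmp C \<chi> (cmp C \<phi> \<phi>) = \<phi>" and \<phi>\<chi>\<chi>: "cmp C \<phi> (cmp C \<chi> \<chi>) = \<chi>"
  shows "cmp C \<chi> (cmp C \<phi> \<chi>) = \<chi>"
proof -
  note [simp] = \<phi>[unfolded hom_iff] \<chi>[unfolded hom_iff]
  have "cmp C \<chi> (cmp C \<phi> \<chi>) = cmp C \<chi> (cmp C \<phi> (cmp C \<phi> (cmp C \<chi> \<chi>)))" by (simp add: \<phi>\<chi>\<chi>)
  also have "\<dots> = cmp C \<phi> (cmp C \<chi> \<chi>)" by (simp add: cmp_reduce3[OF \<chi>\<phi>\<phi>])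
  finally show ?thesis using \<phi>\<chi>\<chi> by simp
qed

lemma selfadjoint_eqI:
  assumes "p \<in> Hom C X X" "q \<in> Hom C X X" "invol C p = p" "invol C q = q"
    and "cmp C q p = p" "cmp C p q = q"
  shows "p = q"
proof -
  have "invol C (cmp C q p) = cmp C (invol C p) (invol C q)"
    using assms(1,2) by (simp add: hom_iff)
  then show ?thesis using assms(3-6) by simp
qed

lemma core_inverse_unique:
  assumes \<phi>: "\<phi> \<in> Hom C X X" and x: "core_inverse C X \<phi> x" and y: "core_inverse C X \<phi> y"
  shows "x = y"
proof -
  have x_hom: "x \<in> Hom C X X" and x_sa: "invol C (cmp C \<phi> x) = cmp C \<phi> x"
    and \<phi>xx: "cmp C \<phi> (cmp C x x) = x" and x\<phi>\<phi>: "cmp C x (cmp C \<phi> \<phi>) = \<phi>"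
    using x unfolding core_inverse_def by auto
  have y_hom: "y \<in> Hom C X X" and y_sa: "invol C (cmp C \<phi> y) = cmp C \<phi> y"
    and \<phi>yy: "cmp C \<phi> (cmp C y y) = y" and y\<phi>\<phi>: "cmp C y (cmp C \<phi> \<phi>) = \<phi>"
    using y unfolding core_inverse_def by auto
  note [simp] = \<phi>[unfolded hom_iff] x_hom[unfolded hom_iff] y_hom[unfolded hom_iff]
  note \<phi>x\<phi> = core_identities_imp_inner[OF \<phi> x_hom x\<phi>\<phi> \<phi>xx]
    and \<phi>y\<phi> = core_identities_imp_inner[OF \<phi> y_hom y\<phi>\<phi> \<phi>yy]
  have \<phi>x_eq: "cmp C \<phi> x = cmp C \<phi> y"
  proof (rule selfadjoint_eqI[OF _ _ x_sa y_sa])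
    show "cmp C \<phi> x \<in> Hom C X X" "cmp C \<phi> y \<in> Hom C X X" by (simp_all add: hom_iff)
    show "cmp C (cmp C \<phi> y) (cmp C \<phi> x) = cmp C \<phi> x" by (simp add: cmp_reduce3[OF \<phi>y\<phi>])
    show "cmp C (cmp C \<phi> x) (cmp C \<phi> y) = cmp C \<phi> y" by (simp add: cmp_reduce3[OF \<phi>x\<phi>])
  qed
  have x\<phi>_eq: "cmp C x \<phi> = cmp C y \<phi>"
  proof -
    have "cmp C x \<phi> = cmp C \<phi> (cmp C x (cmp C x \<phi>))" by (simp add: cmp_reduce3[OF \<phi>xx])
    also have "\<dots> = cmp C y (cmp C \<phi> (cmp C \<phi> (cmp C x (cmp C x \<phi>))))"
      by (simp add: cmp_reduce3[OF y\<phi>\<phi>])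
    also have "\<dots> = cmp C y \<phi>" by (simp add: cmp_reduce3[OF \<phi>xx] \<phi>x\<phi>)
    finally show ?thesis .
  qed
  have "x = cmp C x (cmp C \<phi> y)"
    using core_identities_imp_outer[OF \<phi> x_hom x\<phi>\<phi> \<phi>xx] by (simp add: \<phi>x_eq)
  also have "\<dots> = y"
    using core_identities_imp_outer[OF \<phi> y_hom y\<phi>\<phi> \<phi>yy] by (simp add: cmp_reduce[OF x\<phi>_eq])
  finally show ?thesis .
qed

lemma core_eqI: "\<phi> \<in> Hom C X X \<Longrightarrow> core_inverse C X \<phi> \<chi> \<Longrightarrow> core C X \<phi> = \<chi>"
  unfolding core_def using core_inverse_unique by blast

lemma invertible_kernel_cokernel:
  assumes \<phi>: "\<phi> \<in> Hom C X X" and ker: "is_kernel C \<phi> X X \<kappa> K" and coker: "is_cokernel C \<phi> X X lam L"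
    and \<chi>: "\<chi> \<in> Hom C X X"
    and \<chi>\<phi>\<phi>: "cmp C \<chi> (cmp C \<phi> \<phi>) = \<phi>" and \<phi>\<chi>\<chi>: "cmp C \<phi> (cmp C \<chi> \<chi>) = \<chi>"
  shows "invertible_mor C K L (cmp C \<kappa> lam)"
proof -
  have \<kappa>: "\<kappa> \<in> Hom C K X" and \<kappa>\<phi>: "cmp C \<kappa> \<phi> = zer C K X"
    using ker unfolding is_kernel_def by auto
  have lam: "lam \<in> Hom C X L" and \<phi>lam: "cmp C \<phi> lam = zer C X L"
    using coker unfolding is_cokernel_def by auto
  note [simp] = \<phi>[unfolded hom_iff] \<chi>[unfolded hom_iff] \<kappa>[unfolded hom_iff] lam[unfolded hom_iff] \<kappa>\<phi> \<phi>lam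
  define e where "e = sub_mor C (idm C X) (cmp C \<chi> \<phi>)"
  have e: "e \<in> Hom C X X" unfolding e_def by (simp add: hom_iff)
  note [simp] = e[unfolded hom_iff]
  have "cmp C e \<phi> = zer C X X" unfolding e_def by (simp add: \<chi>\<phi>\<phi>)
  then obtain a where a: "a \<in> Hom C X K" and a\<kappa>: "cmp C a \<kappa> = e"
    using kernel_factor[OF ker e] by metis
  have "cmp C \<phi> e = zer C X X" unfolding e_def by (simp add: core_identities_imp_inner[OF \<phi> \<chi> \<chi>\<phi>\<phi> \<phi>\<chi>\<chi>])
  then obtain b where b: "b \<in> Hom C L X" and lamb: "cmp C lam b = e"
    using cokernel_factor[OF coker e] by metis
  note [simp] = a[unfolded hom_iff] b[unfolded hom_iff]
  have "cmp C \<kappa> \<chi> = cmp C \<kappa> (cmp C \<phi> (cmp C \<chi> \<chi>))" by (simp add: \<phi>\<chi>\<chi>)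
  also have "\<dots> = zer C K X" by (simp add: cmp_reduce[OF \<kappa>\<phi>])
  finally have \<kappa>e: "cmp C \<kappa> e = \<kappa>" unfolding e_def by (simp add: cmp_reduce)
  have \<kappa>a: "cmp C \<kappa> a = idm C K"
    by (rule kernel_right_inverse[OF ker \<phi> a]) (simp add: a\<kappa> \<kappa>e)
  have blam: "cmp C b lam = idm C L"
    by (rule cokernel_left_inverse[OF coker \<phi> b]) (simp add: cmp_reduce[OF lamb] e_def)
  show ?thesis
    by (rule invertible_mor_cmpI[OF \<kappa> lam a b \<kappa>a blam]) (simp add: a\<kappa> lamb)
qed

lemma invertible_kernel_adjoint:
  assumes \<phi>: "\<phi> \<in> Hom C X Y" and ker: "is_kernel C \<phi> X Y \<kappa> K" and \<chi>: "\<chi> \<in> Hom C Y X"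
    and \<phi>\<chi>\<phi>: "cmp C \<phi> (cmp C \<chi> \<phi>) = \<phi>" and \<phi>\<chi>_sa: "invol C (cmp C \<phi> \<chi>) = cmp C \<phi> \<chi>"
  shows "invertible_mor C K K (cmp C \<kappa> (invol C \<kappa>))"
proof -
  have \<kappa>: "\<kappa> \<in> Hom C K X" and \<kappa>\<phi>: "cmp C \<kappa> \<phi> = zer C K Y"
    using ker unfolding is_kernel_def by auto
  note [simp] = \<phi>[unfolded hom_iff] \<chi>[unfolded hom_iff] \<kappa>[unfolded hom_iff] \<kappa>\<phi>
  define d where "d = sub_mor C (idm C X) (cmp C \<phi> \<chi>)"
  have d: "d \<in> Hom C X X" unfolding d_def by (simp add: hom_iff)
  note [simp] = d[unfolded hom_iff]
  have "cmp C d \<phi> = zer C X Y" unfolding d_def by (simp add: \<phi>\<chi>\<phi>)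
  then obtain c where c: "c \<in> Hom C X K" and c\<kappa>: "cmp C c \<kappa> = d"
    using kernel_factor[OF ker d] by metis
  note [simp] = c[unfolded hom_iff]
  have d_sa: "invol C d = d" unfolding d_def using \<phi>\<chi>_sa by simp
  have \<kappa>d: "cmp C \<kappa> d = \<kappa>" unfolding d_def by (simp add: cmp_reduce[OF \<kappa>\<phi>])
  have \<kappa>c: "cmp C \<kappa> c = idm C K"
    by (rule kernel_right_inverse[OF ker \<phi> c]) (simp add: c\<kappa> \<kappa>d)
  have "cmp C (invol C c) (invol C \<kappa>) = idm C K"
    using arg_cong[OF \<kappa>c, of "invol C"] by simp
  moreover have "cmp C c \<kappa> = cmp C (invol C \<kappa>) (invol C c)"
    using d_sa unfolding c\<kappa>[symmetric] by simp
  ultimately show ?thesis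
    using invertible_mor_cmpI[OF \<kappa> invol_closed[OF \<kappa>] c invol_closed[OF c] \<kappa>c] by blast
qed

lemma core_inverse_imp_regular_invertible:
  assumes \<phi>: "\<phi> \<in> Hom C X X" and ker: "is_kernel C \<phi> X X \<kappa> K" and coker: "is_cokernel C \<phi> X X lam L"
    and core: "core_inverse C X \<phi> \<chi>"
  shows "regular C X X \<phi> \<and> invertible_mor C K L (cmp C \<kappa> lam) \<and>
    invertible_mor C K K (cmp C \<kappa> (invol C \<kappa>))"
proof -
  have \<chi>: "\<chi> \<in> Hom C X X" and sa: "invol C (cmp C \<phi> \<chi>) = cmp C \<phi> \<chi>"
    and \<phi>\<chi>\<chi>: "cmp C \<phi> (cmp C \<chi> \<chi>) = \<chi>" and \<chi>\<phi>\<phi>: "cmp C \<chi> (cmp C \<phi> \<phi>) = \<phi>"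
    using core unfolding core_inverse_def by auto
  have inner: "cmp C \<phi> (cmp C \<chi> \<phi>) = \<phi>" by (rule core_identities_imp_inner[OF \<phi> \<chi> \<chi>\<phi>\<phi> \<phi>\<chi>\<chi>])
  then have "regular C X X \<phi>"
    unfolding regular_def using \<phi> \<chi> by (auto simp: hom_iff)
  then show ?thesis
    using invertible_kernel_cokernel[OF \<phi> ker coker \<chi> \<chi>\<phi>\<phi> \<phi>\<chi>\<chi>]
      invertible_kernel_adjoint[OF \<phi> ker \<chi> inner sa] by blast
qed

lemma core_inverse_sandwichI:
  assumes \<phi>: "\<phi> \<in> Hom C X X" and \<psi>: "\<psi> \<in> Hom C X X" and E: "E \<in> Hom C X X" and F: "F \<in> Hom C X X"
    and \<phi>E: "cmp C \<phi> E = \<phi>" and E\<phi>: "cmp C E \<phi> = \<phi>" and F\<phi>: "cmp C F \<phi> = \<phi>"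
    and FE: "cmp C F E = E" and F_sa: "invol C F = F"
    and \<phi>\<psi>F: "cmp C \<phi> (cmp C \<psi> F) = F" and E\<psi>\<phi>: "cmp C E (cmp C \<psi> \<phi>) = E"
  shows "core_inverse C X \<phi> (cmp C E (cmp C \<psi> F))"
proof -
  note [simp] = \<phi>[unfolded hom_iff] \<psi>[unfolded hom_iff] E[unfolded hom_iff] F[unfolded hom_iff]
  define \<chi> where "\<chi> = cmp C E (cmp C \<psi> F)"
  have \<chi>: "\<chi> \<in> Hom C X X" unfolding \<chi>_def by (simp add: hom_iff)
  note [simp] = \<chi>[unfolded hom_iff]
  have \<phi>\<chi>: "cmp C \<phi> \<chi> = F" unfolding \<chi>_def by (simp add: cmp_reduce[OF \<phi>E] \<phi>\<psi>F)
  have "cmp C \<phi> (cmp C \<chi> \<chi>) = cmp C F \<chi>" by (simp add: cmp_reduce[OF \<phi>\<chi>])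
  also have "\<dots> = \<chi>" unfolding \<chi>_def by (simp add: cmp_reduce[OF FE])
  finally have \<phi>\<chi>\<chi>: "cmp C \<phi> (cmp C \<chi> \<chi>) = \<chi>" .
  have \<chi>\<phi>\<phi>: "cmp C \<chi> (cmp C \<phi> \<phi>) = \<phi>"
    unfolding \<chi>_def by (simp add: cmp_reduce[OF F\<phi>] cmp_reduce3[OF E\<psi>\<phi>] E\<phi>)
  show ?thesis
    unfolding \<chi>_def[symmetric] core_inverse_def using \<chi> \<phi>\<chi> F_sa \<phi>\<chi>\<chi> \<chi>\<phi>\<phi> by simp
qed

lemma core_inverse_formula:
  assumes \<phi>: "\<phi> \<in> Hom C X X" and ker: "is_kernel C \<phi> X X \<kappa> K" and coker: "is_cokernel C \<phi> X X lam L"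
    and \<psi>: "\<psi> \<in> Hom C X X" and \<phi>\<psi>\<phi>: "cmp C (cmp C \<phi> \<psi>) \<phi> = \<phi>"
    and u: "u \<in> Hom C L K" and \<kappa>lam_u: "cmp C (cmp C \<kappa> lam) u = idm C K"
    and u_\<kappa>lam: "cmp C u (cmp C \<kappa> lam) = idm C L"
    and v: "v \<in> Hom C K K" and \<kappa>\<kappa>_v: "cmp C (cmp C \<kappa> (invol C \<kappa>)) v = idm C K"
  shows "core_inverse C X \<phi> (cmp C (cmp C (sub_mor C (idm C X) (cmp C (cmp C lam u) \<kappa>)) \<psi>)
    (sub_mor C (idm C X) (cmp C (cmp C (invol C \<kappa>) v) \<kappa>)))"
proof -
  have \<kappa>: "\<kappa> \<in> Hom C K X" and \<kappa>\<phi>: "cmp C \<kappa> \<phi> = zer C K X"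
    using ker unfolding is_kernel_def by auto
  have lam: "lam \<in> Hom C X L" and \<phi>lam: "cmp C \<phi> lam = zer C X L"
    using coker unfolding is_cokernel_def by auto
  note [simp] = \<phi>[unfolded hom_iff] \<psi>[unfolded hom_iff] \<kappa>[unfolded hom_iff] lam[unfolded hom_iff]
    u[unfolded hom_iff] v[unfolded hom_iff] \<kappa>\<phi> \<phi>lam
  have inner: "cmp C \<phi> (cmp C \<psi> \<phi>) = \<phi>" using \<phi>\<psi>\<phi> by simp
  have \<kappa>lam_u': "cmp C \<kappa> (cmp C lam u) = idm C K" using \<kappa>lam_u by simp
  have u_\<kappa>lam': "cmp C u (cmp C \<kappa> lam) = idm C L" using u_\<kappa>lam by simp
  have \<kappa>\<kappa>_v': "cmp C \<kappa> (cmp C (invol C \<kappa>) v) = idm C K" using \<kappa>\<kappa>_v by simp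
  have v_sa: "invol C v = v"
    by (rule selfadjoint_right_inverse[OF _ v _ \<kappa>\<kappa>_v]) (simp_all add: hom_iff)
  define E where "E = sub_mor C (idm C X) (cmp C lam (cmp C u \<kappa>))"
  define F where "F = sub_mor C (idm C X) (cmp C (invol C \<kappa>) (cmp C v \<kappa>))"
  have E: "E \<in> Hom C X X" and F: "F \<in> Hom C X X" unfolding E_def F_def by (simp_all add: hom_iff)
  have \<kappa>E: "cmp C \<kappa> E = zer C K X" unfolding E_def by (simp add: cmp_reduce3[OF \<kappa>lam_u'])
  have Elam: "cmp C E lam = zer C X L" unfolding E_def by (simp add: u_\<kappa>lam')
  have \<kappa>F: "cmp C \<kappa> F = zer C K X" unfolding F_def by (simp add: cmp_reduce3[OF \<kappa>\<kappa>_v'])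
  have "core_inverse C X \<phi> (cmp C E (cmp C \<psi> F))"
  proof (rule core_inverse_sandwichI[OF \<phi> \<psi> E F])
    show "cmp C \<phi> E = \<phi>" unfolding E_def by (simp add: cmp_reduce[OF \<phi>lam])
    show "cmp C E \<phi> = \<phi>" "cmp C F \<phi> = \<phi>" unfolding E_def F_def by simp_all
    show "cmp C F E = E" unfolding F_def using E by (simp add: hom_iff \<kappa>E)
    show "invol C F = F" unfolding F_def by (simp add: v_sa)
    show "cmp C \<phi> (cmp C \<psi> F) = F"
      by (rule cmp_inner_inverse_kernel_annihilator[OF ker \<phi> \<psi> inner F \<kappa>F])
    show "cmp C E (cmp C \<psi> \<phi>) = E"
      by (rule cmp_inner_inverse_cokernel_annihilator[OF coker \<phi> \<psi> inner E Elam])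
  qed
  then show ?thesis unfolding E_def F_def by simp
qed

end

theorem theorem3p3:
  assumes "additive_inv_cat C"
    and "\<phi> \<in> Hom C X X"
    and "is_kernel C \<phi> X X \<kappa> K"
    and "is_cokernel C \<phi> X X lam L"
  shows "((\<exists>\<chi>. core_inverse C X \<phi> \<chi>) \<longleftrightarrow>
            regular C X X \<phi> \<and> invertible_mor C K L (cmp C \<kappa> lam) \<and>
            invertible_mor C K K (cmp C \<kappa> (invol C \<kappa>)))
       \<and> ((\<exists>\<chi>. core_inverse C X \<phi> \<chi>) \<longrightarrow>
            (\<forall>\<psi> \<in> Hom C X X. cmp C (cmp C \<phi> \<psi>) \<phi> = \<phi> \<longrightarrow>
               core C X \<phi> =
                 cmp C (cmp C (sub_mor C (idm C X) (cmp C (cmp C lam (inv_mor C K L (cmp C \<kappa> lam))) \<kappa>))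
                              \<psi>)
                       (sub_mor C (idm C X) (cmp C (cmp C (invol C \<kappa>) (inv_mor C K K (cmp C \<kappa> (invol C \<kappa>)))) \<kappa>))))"
proof -
  interpret additive_inv_cat C by fact
  let ?conditions = "regular C X X \<phi> \<and> invertible_mor C K L (cmp C \<kappa> lam) \<and>
    invertible_mor C K K (cmp C \<kappa> (invol C \<kappa>))"
  have formula: "core_inverse C X \<phi>
      (cmp C (cmp C (sub_mor C (idm C X) (cmp C (cmp C lam (inv_mor C K L (cmp C \<kappa> lam))) \<kappa>)) \<psi>)
        (sub_mor C (idm C X) (cmp C (cmp C (invol C \<kappa>) (inv_mor C K K (cmp C \<kappa> (invol C \<kappa>)))) \<kappa>)))"
    if ?conditions "\<psi> \<in> Hom C X X" "cmp C (cmp C \<phi> \<psi>) \<phi> = \<phi>" for \<psi>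
    using that core_inverse_formula[OF assms(2-4)] invertible_mor_inv_mor by blast
  have "(\<exists>\<chi>. core_inverse C X \<phi> \<chi>) \<longleftrightarrow> ?conditions"
  proof
    show "\<exists>\<chi>. core_inverse C X \<phi> \<chi> \<Longrightarrow> ?conditions"
      using core_inverse_imp_regular_invertible[OF assms(2-4)] by blast
    show "?conditions \<Longrightarrow> \<exists>\<chi>. core_inverse C X \<phi> \<chi>"
      using formula unfolding regular_def by blast
  qed
  then show ?thesis
    using formula core_eqI[OF assms(2)] by blast
qed

end
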